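(* Let $f:\mathbb{R}^d\to\mathbb{R}$ be convex and $L$-smooth ($L>0$) with a unique minimizer $\mathbf{x}^\star$. Let $\sigma_n\ge0$ with $\sigma_n\to0$. Then there is $N$ such that $f_{\sigma_n}$ has a minimizer for all $n\ge N$, and for any choice of minimizers $\mathbf{x}^\star_{\sigma_n}$ of $f_{\sigma_n}$ ($n\ge N$), $\mathbf{x}^\star_{\sigma_n}\to\mathbf{x}^\star$.
   Context: For $\sigma>0$, $f_\sigma(\mathbf{x})=\pi^{-d/2}\int_{\mathbb{R}^d} f(\mathbf{x}+\sigma\mathbf{u})\,e^{-\|\mathbf{u}\|_2^2}\,d\mathbf{u}$, and $f_0=f$. $L$-smooth means differentiable with $L$-Lipschitz gradient. *)

theory Defs
  imports "HOL-Analysis.Analysis"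
begin

definition gauss_smooth :: "real \<Rightarrow> ('a::euclidean_space \<Rightarrow> real) \<Rightarrow> 'a \<Rightarrow> real" where
  "gauss_smooth \<sigma> f x =
     (if \<sigma> = 0 then f x
      else pi powr (- real DIM('a) / 2) *
           (\<integral>u. f (x + \<sigma> *\<^sub>R u) * exp (- (norm u)\<^sup>2) \<partial>lborel))"

definition L_smooth :: "real \<Rightarrow> ('a::euclidean_space \<Rightarrow> real) \<Rightarrow> bool" where
  "L_smooth L f \<longleftrightarrow> (\<exists>g. (\<forall>x. (f has_derivative (\<lambda>h. g x \<bullet> h)) (at x)) \<and>
                         (\<forall>x y. norm (g x - g y) \<le> L * norm (x - y)))"

definition is_minimizer :: "('a \<Rightarrow> real) \<Rightarrow> 'a \<Rightarrow> bool" where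
  "is_minimizer f x \<longleftrightarrow> (\<forall>y. f x \<le> f y)"

end

theory Submission
  imports Defs "HOL-Probability.Distributions"
begin

text \<open>
  The smoothed function is \<open>gauss_smooth \<sigma> f x = E f (x + \<sigma> u)\<close> for a Gaussian vector
  \<open>u\<close> with density \<open>pi powr (-d/2) * exp (-\<parallel>u\<parallel>\<^sup>2)\<close>.  Averaging \<open>u\<close> with \<open>-u\<close>, convexity
  gives \<open>f \<le> gauss_smooth \<sigma> f\<close>, and the descent lemma for the \<open>L\<close>-smooth \<open>f\<close> gives
  \<open>gauss_smooth \<sigma> f \<le> f + C \<sigma>\<^sup>2\<close>; the smoothed function is again convex, hence continuous.
  A continuous convex function with a unique minimiser \<open>x\<^sub>0\<close> grows linearly away from it.
  This coercivity passes to every \<open>gauss_smooth \<sigma> f \<ge> f\<close> and yields its minimisers, and a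
  minimiser \<open>x\<^sub>\<sigma>\<close> satisfies \<open>f x\<^sub>\<sigma> \<le> gauss_smooth \<sigma> f x\<^sub>\<sigma> \<le> gauss_smooth \<sigma> f x\<^sub>0 \<le> f x\<^sub>0 + C \<sigma>\<^sup>2\<close>,
  so the minimisers for \<open>\<sigma>\<^sub>n \<rightarrow> 0\<close> form a minimising sequence of \<open>f\<close>, which converges to \<open>x\<^sub>0\<close>.
\<close>

section \<open>Gaussian integrals\<close>

lemma exp_neg_square_eq_normal_density:
  "exp (- t\<^sup>2) = sqrt pi * normal_density 0 (sqrt (1/2)) t"
  by (simp add: normal_density_def)

lemma nn_integral_exp_neg_square: "(\<integral>\<^sup>+t. exp (- t\<^sup>2) \<partial>lborel) = ennreal (sqrt pi)"
  by (simp add: exp_neg_square_eq_normal_density ennreal_mult nn_integral_cmult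
      nn_integral_eq_integral)

lemma integrable_one_plus_square_exp_neg_square:
  "integrable lborel (\<lambda>t::real. (1 + t\<^sup>2) * exp (- t\<^sup>2))"
proof -
  let ?n = "normal_density 0 (sqrt (1/2))"
  have "integrable lborel (\<lambda>t. sqrt pi * (?n t * (t - 0) ^ 0 + ?n t * (t - 0) ^ 2))"
    by (intro Bochner_Integration.integrable_mult_right Bochner_Integration.integrable_add
        integrable_normal_moment) simp_all
  also have "(\<lambda>t. sqrt pi * (?n t * (t - 0) ^ 0 + ?n t * (t - 0) ^ 2)) = (\<lambda>t. (1 + t\<^sup>2) * exp (- t\<^sup>2))"
    by (simp add: exp_neg_square_eq_normal_density algebra_simps)
  finally show ?thesis .
qed

lemma one_plus_sum_le_prod_one_plus:
  fixes a :: "'b \<Rightarrow> real"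
  assumes "finite I" "\<And>i. i \<in> I \<Longrightarrow> 0 \<le> a i"
  shows "1 + sum a I \<le> (\<Prod>i\<in>I. 1 + a i)"
  using assms
proof (induction I rule: finite_induct)
  case (insert j I)
  then have "1 + sum a (insert j I) \<le> (1 + a j) * (1 + sum a I)"
    by (simp add: algebra_simps sum_nonneg)
  also have "\<dots> \<le> (1 + a j) * (\<Prod>i\<in>I. 1 + a i)"
    using insert by (intro mult_left_mono) auto
  finally show ?case
    using insert by simp
qed simp

lemma power2_norm_eq_sum_Basis:
  "(norm x)\<^sup>2 = (\<Sum>b\<in>Basis. (x \<bullet> b)\<^sup>2)"
  unfolding power2_norm_eq_inner by (subst euclidean_inner) (simp add: power2_eq_square)

lemma exp_neg_norm_square_eq_prod:
  "exp (- (norm x)\<^sup>2) = (\<Prod>b\<in>Basis. exp (- (x \<bullet> b)\<^sup>2))"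
  by (simp add: power2_norm_eq_sum_Basis exp_sum flip: sum_negf)

lemma nn_integral_exp_neg_norm_square:
  "(\<integral>\<^sup>+x. exp (- (norm x)\<^sup>2) \<partial>(lborel :: 'a::euclidean_space measure))
     = ennreal (pi powr (DIM('a) / 2))"
proof -
  have "(\<integral>\<^sup>+x. exp (- (norm x)\<^sup>2) \<partial>(lborel :: 'a measure))
      = (\<integral>\<^sup>+x. (\<Prod>b\<in>Basis. ennreal (exp (- (x \<bullet> b)\<^sup>2))) \<partial>(lborel :: 'a measure))"
    by (simp add: exp_neg_norm_square_eq_prod prod_ennreal)
  also have "\<dots> = ennreal (sqrt pi) ^ DIM('a)"
    by (subst nn_integral_lborel_prod) (simp_all add: nn_integral_exp_neg_square)
  also have "\<dots> = ennreal (pi powr (DIM('a) / 2))"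
    by (simp add: ennreal_power sqrt_def root_powr_inverse powr_powr flip: powr_realpow)
  finally show ?thesis .
qed

lemma integrable_one_plus_norm_square_exp_neg_norm_square:
  "integrable lborel (\<lambda>x::'a::euclidean_space. (1 + (norm x)\<^sup>2) * exp (- (norm x)\<^sup>2))"
proof (subst integrable_iff_bounded, intro conjI)
  let ?h = "\<lambda>t::real. (1 + t\<^sup>2) * exp (- t\<^sup>2)"
  show "(\<lambda>x::'a. (1 + (norm x)\<^sup>2) * exp (- (norm x)\<^sup>2)) \<in> borel_measurable lborel"
    by measurable
  have bound: "(1 + (norm x)\<^sup>2) * exp (- (norm x)\<^sup>2) \<le> (\<Prod>b\<in>Basis. ?h (x \<bullet> b))" for x :: 'a
  proof -
    have "1 + (norm x)\<^sup>2 \<le> (\<Prod>b\<in>Basis. 1 + (x \<bullet> b)\<^sup>2)"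
      unfolding power2_norm_eq_sum_Basis by (rule one_plus_sum_le_prod_one_plus) auto
    then show ?thesis
      by (simp add: exp_neg_norm_square_eq_prod prod.distrib mult_right_mono prod_nonneg)
  qed
  have "(\<integral>\<^sup>+x. norm ((1 + (norm x)\<^sup>2) * exp (- (norm x)\<^sup>2)) \<partial>(lborel :: 'a measure))
      \<le> (\<integral>\<^sup>+x. (\<Prod>b\<in>Basis. ennreal (?h (x \<bullet> b))) \<partial>(lborel :: 'a measure))"
    by (intro nn_integral_mono) (use bound in \<open>simp add: prod_ennreal ennreal_leI\<close>)
  also have "\<dots> = (\<integral>\<^sup>+t. ?h t \<partial>lborel) ^ DIM('a)"
    by (subst nn_integral_lborel_prod) simp_all
  also have "\<dots> < \<infinity>"
    using integrable_one_plus_square_exp_neg_square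
    by (simp add: integrable_iff_bounded less_top[symmetric] power_eq_top_ennreal)
  finally show "(\<integral>\<^sup>+x. norm ((1 + (norm x)\<^sup>2) * exp (- (norm x)\<^sup>2)) \<partial>(lborel :: 'a measure)) < \<infinity>" .
qed

section \<open>The Gaussian measure\<close>

text \<open>The normal law with covariance \<open>I/2\<close>, i.e. the law of the noise \<open>u\<close> in \<open>gauss_smooth\<close>.\<close>
definition gauss_measure :: "'a::euclidean_space measure" where
  "gauss_measure = density lborel (\<lambda>u. pi powr (- DIM('a) / 2) * exp (- (norm u)\<^sup>2))"

lemma space_gauss_measure [simp]: "space gauss_measure = UNIV"
  by (simp add: gauss_measure_def)

lemma sets_gauss_measure [measurable_cong, simp]: "sets gauss_measure = sets borel"
  by (simp add: gauss_measure_def)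

lemma prob_space_gauss_measure: "prob_space (gauss_measure :: 'a::euclidean_space measure)"
proof
  have "emeasure (gauss_measure :: 'a measure) UNIV
      = ennreal (pi powr (- DIM('a) / 2)) * (\<integral>\<^sup>+u. exp (- (norm u)\<^sup>2) \<partial>(lborel :: 'a measure))"
    by (simp add: gauss_measure_def emeasure_density ennreal_mult nn_integral_cmult)
  also have "\<dots> = 1"
    by (simp add: nn_integral_exp_neg_norm_square ennreal_mult'[symmetric] powr_add[symmetric])
  finally show "emeasure (gauss_measure :: 'a measure) (space gauss_measure) = 1"
    by simp
qed

lemma measure_gauss_measure_UNIV [simp]:
  "measure (gauss_measure :: 'a::euclidean_space measure) UNIV = 1"
  using prob_space.prob_space[OF prob_space_gauss_measure[where 'a='a]] by simp

lemma integrable_gauss_measure_const [simp]: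
  "integrable (gauss_measure :: 'a::euclidean_space measure) (\<lambda>_. c :: real)"
  using prob_space.finite_measure[OF prob_space_gauss_measure[where 'a='a]]
  by (simp add: finite_measure.integrable_const)

lemma integral_gauss_measure_eq_lborel:
  fixes h :: "'a::euclidean_space \<Rightarrow> real"
  assumes [measurable]: "h \<in> borel_measurable borel"
  shows "(\<integral>u. h u \<partial>gauss_measure)
    = pi powr (- DIM('a) / 2) * (\<integral>u. h u * exp (- (norm u)\<^sup>2) \<partial>lborel)"
  unfolding gauss_measure_def
  by (subst integral_density) (auto simp: mult_ac simp flip: integral_mult_right_zero)

lemma integrable_gauss_measure_quadratic:
  fixes h :: "'a::euclidean_space \<Rightarrow> real"
  assumes [measurable]: "h \<in> borel_measurable borel"
    and bound: "\<And>u. \<bar>h u\<bar> \<le> c * (1 + (norm u)\<^sup>2)"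
  shows "integrable gauss_measure h"
  unfolding gauss_measure_def
proof (subst integrable_density)
  have "0 \<le> c"
    using bound[of 0] by simp
  show "integrable lborel (\<lambda>u. (pi powr (- DIM('a) / 2) * exp (- (norm u)\<^sup>2)) *\<^sub>R h u)"
  proof (rule Bochner_Integration.integrable_bound)
    show "integrable lborel
        (\<lambda>u::'a. pi powr (- DIM('a) / 2) * c * ((1 + (norm u)\<^sup>2) * exp (- (norm u)\<^sup>2)))"
      by (intro Bochner_Integration.integrable_mult_right integrable_one_plus_norm_square_exp_neg_norm_square)
    show "AE u in lborel. norm ((pi powr (- DIM('a) / 2) * exp (- (norm u)\<^sup>2)) *\<^sub>R h u)
        \<le> norm (pi powr (- DIM('a) / 2) * c * ((1 + (norm u)\<^sup>2) * exp (- (norm u)\<^sup>2)))"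
      using bound \<open>0 \<le> c\<close> by (intro AE_I2) (auto simp: abs_mult mult_left_mono mult_right_mono mult_ac)
  qed simp
qed auto

lemma lborel_distr_uminus_euclidean:
  "distr lborel borel uminus = (lborel :: 'a::euclidean_space measure)"
proof -
  have "(lborel :: 'a measure)
      = density (distr lborel borel (\<lambda>x. 0 + (-1) *\<^sub>R x)) (\<lambda>_. \<bar>-1::real\<bar> ^ DIM('a))"
    by (rule lborel_affine) simp
  then show ?thesis
    by (simp add: density_1)
qed

lemma distr_gauss_measure_uminus:
  "distr gauss_measure borel uminus = (gauss_measure :: 'a::euclidean_space measure)"
proof -
  have "(gauss_measure :: 'a measure)
      = density (distr lborel borel uminus) (\<lambda>u. pi powr (- DIM('a) / 2) * exp (- (norm u)\<^sup>2))"
    by (simp add: gauss_measure_def lborel_distr_uminus_euclidean)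
  also have "\<dots> = distr gauss_measure borel uminus"
    by (subst density_distr) (auto simp: gauss_measure_def)
  finally show ?thesis ..
qed

lemma integral_gauss_measure_symmetrize:
  fixes h :: "'a::euclidean_space \<Rightarrow> real"
  assumes [measurable]: "h \<in> borel_measurable borel" and "integrable gauss_measure h"
  shows "(\<integral>u. h u \<partial>gauss_measure) = (\<integral>u. (h u + h (- u)) / 2 \<partial>gauss_measure)"
proof -
  have "integrable gauss_measure (\<lambda>u. h (- u))"
    using assms(2) by (subst (asm) distr_gauss_measure_uminus[symmetric]) (simp add: integrable_distr_eq)
  moreover have "(\<integral>u. h (- u) \<partial>gauss_measure) = (\<integral>u. h u \<partial>gauss_measure)"
    by (subst (2) distr_gauss_measure_uminus[symmetric]) (simp add: integral_distr)
  ultimately show ?thesis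
    using assms by simp
qed

section \<open>Smooth functions and their Gaussian smoothing\<close>

lemma has_real_derivative_along_line:
  fixes f :: "'a::euclidean_space \<Rightarrow> real"
  assumes "\<And>x. (f has_derivative (\<lambda>h. g x \<bullet> h)) (at x)"
  shows "((\<lambda>t. f (x + t *\<^sub>R v)) has_real_derivative (g (x + t *\<^sub>R v) \<bullet> v)) (at t)"
proof -
  have line: "((\<lambda>t. x + t *\<^sub>R v) has_derivative (\<lambda>s. s *\<^sub>R v)) (at t)"
    by (auto intro!: derivative_eq_intros)
  have "((\<lambda>t. f (x + t *\<^sub>R v)) has_derivative (\<lambda>s. g (x + t *\<^sub>R v) \<bullet> (s *\<^sub>R v))) (at t)"
    using has_derivative_compose[OF line assms] by (simp add: o_def)
  then show ?thesis
    by (simp add: has_field_derivative_def mult_commute_abs)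
qed

lemma gradient_Lipschitz_quadratic_bound:
  fixes f :: "'a::euclidean_space \<Rightarrow> real"
  assumes D: "\<And>x. (f has_derivative (\<lambda>h. g x \<bullet> h)) (at x)"
    and Lip: "\<And>x y. norm (g x - g y) \<le> L * norm (x - y)"
  shows "\<bar>f (x + v) - f x - g x \<bullet> v\<bar> \<le> L / 2 * (norm v)\<^sup>2"
proof -
  have slope: "\<bar>g (x + t *\<^sub>R v) \<bullet> v - g x \<bullet> v\<bar> \<le> L * t * (norm v)\<^sup>2" if "0 \<le> t" for t
  proof -
    have "\<bar>g (x + t *\<^sub>R v) \<bullet> v - g x \<bullet> v\<bar> \<le> norm (g (x + t *\<^sub>R v) - g x) * norm v"
      by (metis Cauchy_Schwarz_ineq2 inner_diff_left)
    also have "\<dots> \<le> L * norm (t *\<^sub>R v) * norm v"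
      using Lip[of "x + t *\<^sub>R v" x] by (intro mult_right_mono) auto
    finally show ?thesis
      using that by (simp add: power2_eq_square mult_ac)
  qed
  txt \<open>\<open>p\<close> and \<open>q\<close> subtract from \<open>f\<close> on the segment its tangent line \<open>\<mp>\<close> the parabola
    \<open>L t\<^sup>2 \<parallel>v\<parallel>\<^sup>2 / 2\<close>; by \<open>slope\<close> their derivatives have signs making \<open>p\<close> antitone, \<open>q\<close> monotone.\<close>
  define p where "p t = f (x + t *\<^sub>R v) - t * (g x \<bullet> v) - L / 2 * t\<^sup>2 * (norm v)\<^sup>2" for t
  define q where "q t = f (x + t *\<^sub>R v) - t * (g x \<bullet> v) + L / 2 * t\<^sup>2 * (norm v)\<^sup>2" for t
  have dp: "(p has_real_derivative (g (x + t *\<^sub>R v) \<bullet> v - g x \<bullet> v - L * t * (norm v)\<^sup>2)) (at t)"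
    and dq: "(q has_real_derivative (g (x + t *\<^sub>R v) \<bullet> v - g x \<bullet> v + L * t * (norm v)\<^sup>2)) (at t)" for t
    unfolding p_def q_def
    by (auto intro!: derivative_eq_intros has_real_derivative_along_line[OF D])
  have "p 1 \<le> p 0"
    by (rule DERIV_nonpos_imp_nonincreasing[of 0 1 p]) (use dp slope in fastforce)+
  moreover have "q 0 \<le> q 1"
    by (rule DERIV_nonneg_imp_nondecreasing[of 0 1 q]) (use dq slope in fastforce)+
  ultimately show ?thesis
    unfolding p_def q_def abs_le_iff by simp
qed

lemma L_smooth_continuous: "L_smooth L f \<Longrightarrow> continuous_on UNIV f"
  unfolding L_smooth_def
  by (meson continuous_at_imp_continuous_on has_derivative_continuous)

lemma L_smooth_borel_measurable: "L_smooth L f \<Longrightarrow> f \<in> borel_measurable borel"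
  using L_smooth_continuous borel_measurable_continuous_onI by blast

lemma L_smooth_second_difference:
  assumes "L_smooth L f"
  shows "f (x + v) + f (x - v) \<le> 2 * f x + L * (norm v)\<^sup>2"
proof -
  obtain g where D: "\<And>x. (f has_derivative (\<lambda>h. g x \<bullet> h)) (at x)"
    and Lip: "\<And>x y. norm (g x - g y) \<le> L * norm (x - y)"
    using assms unfolding L_smooth_def by blast
  have "\<bar>f (x + v) - f x - g x \<bullet> v\<bar> \<le> L / 2 * (norm v)\<^sup>2"
    "\<bar>f (x - v) - f x + g x \<bullet> v\<bar> \<le> L / 2 * (norm v)\<^sup>2"
    using gradient_Lipschitz_quadratic_bound[OF D Lip, of x v]
      gradient_Lipschitz_quadratic_bound[OF D Lip, of x "- v"]
    by simp_all
  then show ?thesis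
    unfolding abs_le_iff by linarith
qed

lemma le_one_plus_power2: "0 \<le> r \<Longrightarrow> r \<le> 1 + (r :: real)\<^sup>2"
  using zero_le_power2[of "r - 1"] unfolding power2_diff by simp

lemma L_smooth_integrable_gauss_measure:
  assumes "L_smooth L f"
  shows "integrable gauss_measure (\<lambda>u. f (x + s *\<^sub>R u))"
proof -
  obtain g where D: "\<And>x. (f has_derivative (\<lambda>h. g x \<bullet> h)) (at x)"
    and Lip: "\<And>x y. norm (g x - g y) \<le> L * norm (x - y)"
    using assms unfolding L_smooth_def by blast
  note L_smooth_borel_measurable[OF assms, measurable]
  define c where "c = \<bar>f x\<bar> + norm (g x) * \<bar>s\<bar> + \<bar>L\<bar> * s\<^sup>2"
  show ?thesis
  proof (rule integrable_gauss_measure_quadratic)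
    fix u :: 'a
    have "norm u \<le> 1 + (norm u)\<^sup>2"
      by (rule le_one_plus_power2) simp
    have "\<bar>g x \<bullet> (s *\<^sub>R u)\<bar> \<le> norm (g x) * \<bar>s\<bar> * norm u"
      using Cauchy_Schwarz_ineq2[of "g x" "s *\<^sub>R u"] by (simp add: mult_ac)
    also have "\<dots> \<le> norm (g x) * \<bar>s\<bar> * (1 + (norm u)\<^sup>2)"
      using \<open>norm u \<le> 1 + (norm u)\<^sup>2\<close> by (rule mult_left_mono) simp
    moreover have "L / 2 * (norm (s *\<^sub>R u))\<^sup>2 \<le> \<bar>L\<bar> * s\<^sup>2 * (1 + (norm u)\<^sup>2)"
    proof -
      have "L / 2 * (s\<^sup>2 * (norm u)\<^sup>2) \<le> \<bar>L\<bar> * (s\<^sup>2 * (1 + (norm u)\<^sup>2))"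
        by (intro mult_mono mult_left_mono) auto
      then show ?thesis
        by (simp add: power_mult_distrib mult.assoc)
    qed
    moreover have "\<bar>f x\<bar> \<le> \<bar>f x\<bar> * (1 + (norm u)\<^sup>2)"
      by (simp add: distrib_left)
    ultimately show "\<bar>f (x + s *\<^sub>R u)\<bar> \<le> c * (1 + (norm u)\<^sup>2)"
      using gradient_Lipschitz_quadratic_bound[OF D Lip, of x "s *\<^sub>R u"]
      unfolding c_def distrib_right abs_le_iff by linarith
  qed simp
qed

lemma gauss_smooth_eq_integral:
  fixes f :: "'a::euclidean_space \<Rightarrow> real"
  assumes [measurable]: "f \<in> borel_measurable borel"
  shows "gauss_smooth s f x = (\<integral>u. f (x + s *\<^sub>R u) \<partial>gauss_measure)"
proof (cases "s = 0")
  case True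
  then show ?thesis
    by (simp add: gauss_smooth_def)
next
  case False
  then show ?thesis
    by (simp add: gauss_smooth_def integral_gauss_measure_eq_lborel)
qed

lemma gauss_smooth_ge:
  fixes f :: "'a::euclidean_space \<Rightarrow> real"
  assumes smooth: "L_smooth L f" and cvx: "convex_on UNIV f"
  shows "f x \<le> gauss_smooth s f x"
proof -
  note L_smooth_borel_measurable[OF smooth, measurable]
  have int: "integrable gauss_measure (\<lambda>u. f (x + s *\<^sub>R u))"
    "integrable gauss_measure (\<lambda>u. f (x - s *\<^sub>R u))"
    using L_smooth_integrable_gauss_measure[OF smooth, of x s]
      L_smooth_integrable_gauss_measure[OF smooth, of x "- s"] by simp_all
  have "f x \<le> (f (x + s *\<^sub>R u) + f (x + s *\<^sub>R - u)) / 2" for u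
    using convex_onD[OF cvx, of "1/2" "x + s *\<^sub>R u" "x - s *\<^sub>R u"]
    by (simp add: algebra_simps flip: scaleR_add_left)
  then have "f x \<le> (\<integral>u. (f (x + s *\<^sub>R u) + f (x + s *\<^sub>R - u)) / 2 \<partial>gauss_measure)"
    by (intro prob_space.integral_ge_const[OF prob_space_gauss_measure]) (simp_all add: int)
  also have "\<dots> = (\<integral>u. f (x + s *\<^sub>R u) \<partial>gauss_measure)"
    by (rule integral_gauss_measure_symmetrize[symmetric]) (simp_all add: int)
  also have "\<dots> = gauss_smooth s f x"
    by (simp add: gauss_smooth_eq_integral)
  finally show ?thesis .
qed

lemma gauss_smooth_le:
  fixes f :: "'a::euclidean_space \<Rightarrow> real"
  assumes smooth: "L_smooth L f"
  shows "gauss_smooth s f x \<le> f x + L / 2 * s\<^sup>2 * (\<integral>u. (norm (u::'a))\<^sup>2 \<partial>gauss_measure)"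
proof -
  note L_smooth_borel_measurable[OF smooth, measurable]
  have int: "integrable gauss_measure (\<lambda>u. f (x + s *\<^sub>R u))"
    "integrable gauss_measure (\<lambda>u. f (x - s *\<^sub>R u))"
    using L_smooth_integrable_gauss_measure[OF smooth, of x s]
      L_smooth_integrable_gauss_measure[OF smooth, of x "- s"] by simp_all
  have int2: "integrable gauss_measure (\<lambda>u::'a. (norm u)\<^sup>2)"
    by (rule integrable_gauss_measure_quadratic[where c = 1]) auto
  have "gauss_smooth s f x = (\<integral>u. (f (x + s *\<^sub>R u) + f (x + s *\<^sub>R - u)) / 2 \<partial>gauss_measure)"
    unfolding gauss_smooth_eq_integral[OF L_smooth_borel_measurable[OF smooth]]
    by (rule integral_gauss_measure_symmetrize) (simp_all add: int)
  also have "\<dots> \<le> (\<integral>u. f x + L / 2 * s\<^sup>2 * (norm (u::'a))\<^sup>2 \<partial>gauss_measure)"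
  proof (rule integral_mono)
    fix u :: 'a
    show "(f (x + s *\<^sub>R u) + f (x + s *\<^sub>R - u)) / 2 \<le> f x + L / 2 * s\<^sup>2 * (norm u)\<^sup>2"
      using L_smooth_second_difference[OF smooth, of x "s *\<^sub>R u"] by (simp add: power_mult_distrib)
  qed (auto intro!: Bochner_Integration.integrable_add Bochner_Integration.integrable_mult_right
      int int2)
  also have "\<dots> = f x + L / 2 * s\<^sup>2 * (\<integral>u. (norm (u::'a))\<^sup>2 \<partial>gauss_measure)"
    using int2 by simp
  finally show ?thesis .
qed

lemma convex_on_gauss_smooth:
  fixes f :: "'a::euclidean_space \<Rightarrow> real"
  assumes smooth: "L_smooth L f" and cvx: "convex_on UNIV f"
  shows "convex_on UNIV (gauss_smooth s f)"
proof (rule convex_onI)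
  fix t :: real and x y :: 'a
  assume t: "0 < t" "t < 1"
  note L_smooth_borel_measurable[OF smooth, measurable]
  have "gauss_smooth s f ((1 - t) *\<^sub>R x + t *\<^sub>R y)
      = (\<integral>u. f ((1 - t) *\<^sub>R x + t *\<^sub>R y + s *\<^sub>R u) \<partial>gauss_measure)"
    by (simp add: gauss_smooth_eq_integral)
  also have "\<dots> \<le> (\<integral>u. (1 - t) * f (x + s *\<^sub>R u) + t * f (y + s *\<^sub>R u) \<partial>gauss_measure)"
  proof (rule integral_mono)
    fix u :: 'a
    have "(1 - t) *\<^sub>R x + t *\<^sub>R y + s *\<^sub>R u = (1 - t) *\<^sub>R (x + s *\<^sub>R u) + t *\<^sub>R (y + s *\<^sub>R u)"
      by (simp add: algebra_simps)
    then show "f ((1 - t) *\<^sub>R x + t *\<^sub>R y + s *\<^sub>R u) \<le> (1 - t) * f (x + s *\<^sub>R u) + t * f (y + s *\<^sub>R u)"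
      using convex_onD[OF cvx, of t] t by simp
  qed (simp_all add: L_smooth_integrable_gauss_measure[OF smooth])
  also have "\<dots> = (1 - t) * gauss_smooth s f x + t * gauss_smooth s f y"
    by (simp add: gauss_smooth_eq_integral L_smooth_integrable_gauss_measure[OF smooth])
  finally show "gauss_smooth s f ((1 - t) *\<^sub>R x + t *\<^sub>R y) \<le> (1 - t) * gauss_smooth s f x + t * gauss_smooth s f y" .
qed simp

section \<open>Convex functions with a unique minimiser\<close>

lemma convex_unique_minimizer_linear_growth:
  fixes f :: "'a::euclidean_space \<Rightarrow> real"
  assumes cvx: "convex_on UNIV f" and cont: "continuous_on UNIV f"
    and mn: "is_minimizer f x0" and uq: "\<And>y. is_minimizer f y \<Longrightarrow> y = x0"
    and e: "0 < e"
  shows "\<exists>d>0. \<forall>x. e \<le> norm (x - x0) \<longrightarrow> f x0 + d * norm (x - x0) \<le> f x"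
proof -
  obtain z where z: "z \<in> sphere x0 e" and zmin: "\<And>y. y \<in> sphere x0 e \<Longrightarrow> f z \<le> f y"
    using continuous_attains_inf[of "sphere x0 e" f] continuous_on_subset[OF cont] e by auto
  have "\<not> is_minimizer f z"
    using uq z e by auto
  then have d: "0 < f z - f x0"
    using mn unfolding is_minimizer_def by (meson le_less_trans not_le diff_gt_0_iff_gt)
  show ?thesis
  proof (intro exI[of _ "(f z - f x0) / e"] conjI allI impI)
    show "0 < (f z - f x0) / e"
      using d e by simp
    fix x assume far: "e \<le> norm (x - x0)"
    have "x \<noteq> x0"
      using far e by auto
    define t where "t = e / norm (x - x0)"
    have t: "0 < t" "t \<le> 1"
      using far e by (auto simp: t_def divide_le_eq intro!: divide_pos_pos)
    have "(1 - t) *\<^sub>R x0 + t *\<^sub>R x - x0 = t *\<^sub>R (x - x0)"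
      by (simp add: algebra_simps)
    then have "norm (((1 - t) *\<^sub>R x0 + t *\<^sub>R x) - x0) = e"
      using e \<open>x \<noteq> x0\<close> by (simp add: t_def)
    then have "f z \<le> f ((1 - t) *\<^sub>R x0 + t *\<^sub>R x)"
      by (intro zmin) (simp add: dist_norm norm_minus_commute)
    also have "\<dots> \<le> (1 - t) * f x0 + t * f x"
      using t by (intro convex_onD[OF cvx]) auto
    finally have "f z - f x0 \<le> t * (f x - f x0)"
      by (simp add: algebra_simps)
    then have "(f z - f x0) / t \<le> f x - f x0"
      using t by (simp add: divide_le_eq mult.commute)
    then show "f x0 + (f z - f x0) / e * norm (x - x0) \<le> f x"
      using e far by (simp add: t_def)
  qed
qed

lemma continuous_coercive_has_minimizer:
  fixes h :: "'a::euclidean_space \<Rightarrow> real"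
  assumes cont: "continuous_on UNIV h" and far: "\<And>y. R < norm (y - a) \<Longrightarrow> h a \<le> h y"
  shows "\<exists>x. is_minimizer h x"
proof -
  obtain z where "z \<in> cball a \<bar>R\<bar>" and zmin: "\<And>y. y \<in> cball a \<bar>R\<bar> \<Longrightarrow> h z \<le> h y"
    using continuous_attains_inf[of "cball a \<bar>R\<bar>" h] continuous_on_subset[OF cont] by auto
  have "h z \<le> h y" for y
  proof (cases "y \<in> cball a \<bar>R\<bar>")
    case False
    then have "h a \<le> h y"
      by (intro far) (auto simp: dist_norm norm_minus_commute)
    then show ?thesis
      using zmin[of a] by simp
  qed (rule zmin)
  then show ?thesis
    unfolding is_minimizer_def by blast
qed

lemma convex_unique_minimizer_perturbation_has_minimizer:
  fixes f h :: "'a::euclidean_space \<Rightarrow> real"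
  assumes cvx: "convex_on UNIV f" and cont: "continuous_on UNIV f"
    and mn: "is_minimizer f x0" and uq: "\<And>y. is_minimizer f y \<Longrightarrow> y = x0"
    and cont_h: "continuous_on UNIV h" and above: "\<And>y. f y \<le> h y" and close: "h x0 \<le> f x0 + c"
  shows "\<exists>x. is_minimizer h x"
proof -
  obtain d where d: "0 < d" and growth: "\<And>y. 1 \<le> norm (y - x0) \<Longrightarrow> f x0 + d * norm (y - x0) \<le> f y"
    using convex_unique_minimizer_linear_growth[OF cvx cont mn uq zero_less_one] by auto
  show ?thesis
  proof (rule continuous_coercive_has_minimizer[OF cont_h, of "max 1 (c / d)"])
    fix y assume "max 1 (c / d) < norm (y - x0)"
    then have "1 \<le> norm (y - x0)" "c \<le> d * norm (y - x0)"
      using d by (auto simp: divide_less_eq mult.commute)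
    then show "h x0 \<le> h y"
      using growth[of y] above[of y] close by linarith
  qed
qed

lemma convex_unique_minimizer_minimizing_sequence:
  fixes f :: "'a::euclidean_space \<Rightarrow> real"
  assumes cvx: "convex_on UNIV f" and cont: "continuous_on UNIV f"
    and mn: "is_minimizer f x0" and uq: "\<And>y. is_minimizer f y \<Longrightarrow> y = x0"
    and lim: "(\<lambda>n. f (x n)) \<longlonglongrightarrow> f x0"
  shows "x \<longlonglongrightarrow> x0"
proof (rule tendstoI)
  fix e :: real assume e: "0 < e"
  obtain d where d: "0 < d"
    and growth: "\<And>y. e \<le> norm (y - x0) \<Longrightarrow> f x0 + d * norm (y - x0) \<le> f y"
    using convex_unique_minimizer_linear_growth[OF cvx cont mn uq e] by auto
  have "eventually (\<lambda>n. f (x n) < f x0 + d * e) sequentially"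
    using lim d e by (intro order_tendstoD(2)) auto
  then show "eventually (\<lambda>n. dist (x n) x0 < e) sequentially"
  proof (rule eventually_mono)
    fix n assume small: "f (x n) < f x0 + d * e"
    show "dist (x n) x0 < e"
    proof (rule ccontr)
      assume "\<not> dist (x n) x0 < e"
      then have far: "e \<le> norm (x n - x0)"
        by (simp add: dist_norm)
      then have "d * e \<le> d * norm (x n - x0)"
        using d by simp
      then show False
        using growth[OF far] small by linarith
    qed
  qed
qed

lemma convex_unique_minimizer_approximate_minimizers_converge:
  fixes f :: "'a::euclidean_space \<Rightarrow> real" and h :: "nat \<Rightarrow> 'a \<Rightarrow> real"
  assumes cvx: "convex_on UNIV f" and cont: "continuous_on UNIV f"
    and mn: "is_minimizer f x0" and uq: "\<And>y. is_minimizer f y \<Longrightarrow> y = x0"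
    and above: "\<And>n y. f y \<le> h n y" and close: "\<And>n. h n x0 \<le> f x0 + c n" and c: "c \<longlonglongrightarrow> 0"
    and mins: "\<And>n. is_minimizer (h n) (x n)"
  shows "x \<longlonglongrightarrow> x0"
proof (rule convex_unique_minimizer_minimizing_sequence[OF cvx cont mn uq])
  have lower: "f x0 \<le> f (x n)" for n
    using mn unfolding is_minimizer_def by blast
  have upper: "f (x n) \<le> f x0 + c n" for n
    using above[of "x n" n] mins[of n] close[of n] unfolding is_minimizer_def by (meson order_trans)
  have lim: "(\<lambda>n. f x0 + c n) \<longlonglongrightarrow> f x0"
    using tendsto_add[OF tendsto_const c] by simp
  show "(\<lambda>n. f (x n)) \<longlonglongrightarrow> f x0"
    by (rule tendsto_sandwich[OF _ _ tendsto_const lim]) (simp_all add: lower upper)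
qed

theorem corollary3p10:
  fixes f :: "'a::euclidean_space \<Rightarrow> real" and L :: real and xstar :: 'a
    and \<sigma> :: "nat \<Rightarrow> real"
  assumes "convex_on UNIV f"
    and "L > 0" and "L_smooth L f"
    and "is_minimizer f xstar" and "\<And>y. is_minimizer f y \<Longrightarrow> y = xstar"
    and "\<And>n. \<sigma> n \<ge> 0" and "\<sigma> \<longlonglongrightarrow> 0"
  shows "\<exists>N. (\<forall>n\<ge>N. \<exists>x. is_minimizer (gauss_smooth (\<sigma> n) f) x) \<and>
             (\<forall>xs :: nat \<Rightarrow> 'a. (\<forall>n\<ge>N. is_minimizer (gauss_smooth (\<sigma> n) f) (xs n))
                 \<longrightarrow> xs \<longlonglongrightarrow> xstar)"
proof -
  note cvx = assms(1) and smooth = assms(3) and mn = assms(4) and uq = assms(5)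
  have cont: "continuous_on UNIV f"
    using smooth by (rule L_smooth_continuous)
  define C where "C = L / 2 * (\<integral>u. (norm (u::'a))\<^sup>2 \<partial>gauss_measure)"
  have above: "f y \<le> gauss_smooth s f y" for s y
    using smooth cvx by (rule gauss_smooth_ge)
  have close: "gauss_smooth s f y \<le> f y + C * s\<^sup>2" for s y
    using gauss_smooth_le[OF smooth, of s y] by (simp add: C_def mult_ac)
  have cont_smooth: "continuous_on UNIV (gauss_smooth s f)" for s
    using convex_on_continuous[OF open_UNIV convex_on_gauss_smooth[OF smooth cvx]] .
  have exists: "\<exists>x. is_minimizer (gauss_smooth s f) x" for s
    by (rule convex_unique_minimizer_perturbation_has_minimizer[OF cvx cont mn _ cont_smooth above close])
      (fact uq)
  have "(\<lambda>n. C * (\<sigma> n)\<^sup>2) \<longlonglongrightarrow> C * 0\<^sup>2"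
    by (intro tendsto_intros assms(7))
  then have "xs \<longlonglongrightarrow> xstar" if "\<And>n. is_minimizer (gauss_smooth (\<sigma> n) f) (xs n)" for xs
    using convex_unique_minimizer_approximate_minimizers_converge[OF cvx cont mn _ above close _ that]
    by (simp add: uq)
  then show ?thesis
    using exists by (auto intro!: exI[of _ "0 :: nat"])
qed

end
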